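(* The set $\widetilde K_2=\{A\in GU_3(\mathbb{Z}_2): A_{11}\equiv A_{22}\equiv A_{33}\equiv 1\pmod{2+2i}\}$ is a group, and $GU_3(\mathbb{Z}_2)=\widetilde K_2\rtimes GU_3(\mathbb{Z})$.
   Context: $GU_3(R)=\{g\in GL_3(R[i]):gg^*=\lambda I,\ \lambda\in R^\times\}$ with $g^*$ the conjugate transpose ($i\mapsto -i$); here $R[i]=\mathbb{Z}_2[i]$ for $R=\mathbb{Z}_2$. $GU_3(\mathbb{Z})$ is the group of monomial matrices with nonzero entries in $\{\pm1,\pm i\}$. *)

theory Defs
  imports "HOL-Analysis.Analysis" "HOL-Algebra.Algebra"
begin

section \<open>The 2-adic integers \<open>\<int>\<^sub>2\<close> as the inverse limit of \<open>\<int>/2^n\<close>\<close>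

typedef z2 = "{f :: nat \<Rightarrow> int. \<forall>n. 0 \<le> f n \<and> f n < 2^n \<and> f (Suc n) mod 2^n = f n}"
  by (rule exI[of _ "\<lambda>_. 0"]) simp

setup_lifting type_definition_z2

lemma z2_coh:
  fixes F :: "int \<Rightarrow> int \<Rightarrow> int"
  assumes F: "\<And>a b a' b' (m::int). a mod m = a' mod m \<Longrightarrow> b mod m = b' mod m \<Longrightarrow> F a b mod m = F a' b' mod m"
    and x: "\<And>n. 0 \<le> x n \<and> x n < 2^n \<and> x (Suc n) mod 2^n = x n"
    and y: "\<And>n. 0 \<le> y n \<and> y n < 2^n \<and> y (Suc n) mod 2^n = y n"
  shows "0 \<le> F (x n) (y n) mod 2^n \<and> F (x n) (y n) mod 2^n < 2^n
     \<and> F (x (Suc n)) (y (Suc n)) mod 2^(Suc n) mod 2^n = F (x n) (y n) mod 2^n"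
proof -
  have d: "(2::int)^n dvd 2^Suc n" by simp
  have "F (x (Suc n)) (y (Suc n)) mod 2^(Suc n) mod 2^n = F (x (Suc n)) (y (Suc n)) mod 2^n"
    using d by (simp add: mod_mod_cancel)
  also have "\<dots> = F (x n) (y n) mod 2^n"
    by (rule F) (use x y in auto)
  finally show ?thesis by simp
qed

instantiation z2 :: comm_ring_1
begin

lift_definition zero_z2 :: z2 is "\<lambda>n. 0" by simp
lift_definition one_z2 :: z2 is "\<lambda>n. (1::int) mod 2^n"
  apply (intro allI conjI)
    apply simp
   apply simp
  subgoal for n using mod_mod_cancel[of "(2::int)^n" "2^Suc n" 1] by (simp del: power_Suc)
  done
lift_definition plus_z2 :: "z2 \<Rightarrow> z2 \<Rightarrow> z2" is "\<lambda>f g n. (f n + g n) mod 2^n"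
  subgoal for f g n
    by (rule z2_coh[where F="(+)" and x=f and y=g and n=n]) (assumption | rule mod_add_cong)+
  done
lift_definition minus_z2 :: "z2 \<Rightarrow> z2 \<Rightarrow> z2" is "\<lambda>f g n. (f n - g n) mod 2^n"
  subgoal for f g n
    by (rule z2_coh[where F="(-)" and x=f and y=g and n=n]) (assumption | rule mod_diff_cong)+
  done
lift_definition times_z2 :: "z2 \<Rightarrow> z2 \<Rightarrow> z2" is "\<lambda>f g n. (f n * g n) mod 2^n"
  subgoal for f g n
    by (rule z2_coh[where F="(*)" and x=f and y=g and n=n]) (assumption | rule mod_mult_cong)+
  done
lift_definition uminus_z2 :: "z2 \<Rightarrow> z2" is "\<lambda>f n. (- f n) mod 2^n"
  subgoal for f n
    by (rule z2_coh[where F="\<lambda>a b. - a" and x=f and y=f and n=n]) (assumption | rule mod_minus_cong)+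
  done

lemma z2_rng: "\<forall>n::nat. 0 \<le> (f::nat\<Rightarrow>int) n \<and> f n < 2^n \<and> f (Suc n) mod 2^n = f n \<Longrightarrow> f n mod 2^n = f n"
  by (simp add: mod_pos_pos_trivial)

instance
proof
  fix a b c :: z2
  show "a * b * c = a * (b * c)"
    by transfer (rule ext, simp add: mod_mult_left_eq mod_mult_right_eq mult.assoc)
  show "a * b = b * a" by transfer (simp add: mult.commute)
  show "1 * a = a"
  proof transfer
    fix a :: "nat \<Rightarrow> int"
    assume A: "\<forall>n. 0 \<le> a n \<and> a n < 2^n \<and> a (Suc n) mod 2^n = a n"
    show "(\<lambda>n. ((1::int) mod 2^n * a n) mod 2^n) = a"
    proof
      fix n show "((1::int) mod 2^n * a n) mod 2^n = a n"
        using z2_rng[OF A, of n] mod_mult_left_eq[of "1::int" "2^n" "a n"] by simp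
    qed
  qed
  show "a + b + c = a + (b + c)"
    by transfer (rule ext, simp add: mod_add_left_eq mod_add_right_eq add.assoc)
  show "a + b = b + a" by transfer (simp add: add.commute)
  show "0 + a = a" by transfer (rule ext, simp add: z2_rng)
  show "- a + a = 0" by transfer (rule ext, simp add: mod_add_left_eq)
  show "a - b = a + - b" by transfer (rule ext, simp add: mod_add_right_eq)
  show "(a + b) * c = a * c + b * c"
    by transfer (rule ext, simp add: mod_mult_left_eq mod_add_eq distrib_right)
  show "(0::z2) \<noteq> 1" by transfer (auto simp: fun_eq_iff intro!: exI[of _ 1])
qed

end

datatype 'a gauss = Gauss (re: 'a) (im: 'a)

instantiation gauss :: (comm_ring_1) comm_ring_1
begin
definition "0 = Gauss 0 0"
definition "1 = Gauss 1 0"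
definition "x + y = Gauss (re x + re y) (im x + im y)"
definition "x - y = Gauss (re x - re y) (im x - im y)"
definition "- x = Gauss (- re x) (- im x)"
definition "x * y = Gauss (re x * re y - im x * im y) (re x * im y + im x * re y)"
instance
  by standard (auto simp: zero_gauss_def one_gauss_def plus_gauss_def minus_gauss_def
      uminus_gauss_def times_gauss_def algebra_simps intro: gauss.expand)
end

definition gi :: "'a::comm_ring_1 gauss" where "gi = Gauss 0 1"
definition gcnj :: "'a::comm_ring_1 gauss \<Rightarrow> 'a gauss" where "gcnj x = Gauss (re x) (- im x)"
definition gof :: "'a::comm_ring_1 \<Rightarrow> 'a gauss" where "gof a = Gauss a 0"

type_synonym mat3 = "z2 gauss ^ 3 ^ 3"

definition ctrans :: "mat3 \<Rightarrow> mat3" where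
  "ctrans g = (\<chi> i j. gcnj (g $ j $ i))"

definition GU3_Z2 :: "mat3 set" where
  "GU3_Z2 = {g. invertible g \<and> (\<exists>l::z2. l dvd 1 \<and> g ** ctrans g = mat (gof l))}"

definition GU3_Z2_grp :: "mat3 monoid" where
  "GU3_Z2_grp = \<lparr>carrier = GU3_Z2, mult = (**), one = mat 1\<rparr>"

text \<open>\<open>GU\<^sub>3(\<int>)\<close>, viewed inside \<open>GU\<^sub>3(\<int>\<^sub>2)\<close>: the monomial matrices with nonzero
  entries in \<open>{\<plusminus>1, \<plusminus>i}\<close>.\<close>
definition GU3_Z :: "mat3 set" where
  "GU3_Z = {g. \<exists>\<sigma> :: 3 \<Rightarrow> 3. \<exists>u :: 3 \<Rightarrow> z2 gauss. bij \<sigma> \<and> (\<forall>k. u k \<in> {1, -1, gi, - gi})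
              \<and> (\<forall>k l. g $ k $ l = (if l = \<sigma> k then u k else 0))}"

definition K2t :: "mat3 set" where
  "K2t = {A \<in> GU3_Z2. \<forall>k. (2 + 2 * gi) dvd (A $ k $ k - 1)}"

end

theory Submission
  imports Defs
begin

text \<open>
  Write \<open>\<pi> = 1 + i\<close>. Then \<open>2 = -i \<pi>\<^sup>2\<close> and \<open>2 + 2i = -i \<pi>\<^sup>3\<close>, and \<open>\<int>\<^sub>2[i]/(\<pi>)\<close> is the field
  with two elements. Reducing \<open>A A\<^sup>* = \<lambda>I\<close> modulo \<open>\<pi>\<close> shows that \<open>A\<close> is a permutation matrix
  modulo \<open>\<pi>\<close>. Since \<open>\<plusminus>1, \<plusminus>i\<close> represent the units modulo \<open>\<pi>\<^sup>3\<close>, multiplying \<open>A\<close> on the right by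
  a monomial matrix with these entries brings its diagonal to \<open>1\<close> modulo \<open>\<pi>\<^sup>3\<close>; this gives
  \<open>GU\<^sub>3(\<int>\<^sub>2) = K\<^sub>2~ GU\<^sub>3(\<int>)\<close>, and only the identity of \<open>GU\<^sub>3(\<int>)\<close> lies in \<open>K\<^sub>2~\<close>.
  For \<open>A \<in> K\<^sub>2~\<close>, the entries of \<open>A A\<^sup>* = \<lambda>I\<close> read modulo \<open>\<pi>\<^sup>2\<close> and \<open>\<pi>\<^sup>3\<close> force the
  off-diagonal entries to be \<open>\<pi>\<close> times elements with one common residue modulo \<open>\<pi>\<close>, which
  makes the diagonal condition stable under products and inverses. Conjugation by a monomial
  matrix permutes the diagonal up to factors of norm \<open>1\<close>, so \<open>K\<^sub>2~\<close> is normal.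
\<close>

lemma Rep_z2_bounds: "0 \<le> Rep_z2 a n \<and> Rep_z2 a n < 2^n \<and> Rep_z2 a (Suc n) mod 2^n = Rep_z2 a n"
  using Rep_z2[of a] by auto

lemma Rep_z2_Suc_mod_2: "Rep_z2 a (Suc n) mod 2 = Rep_z2 a 1"
proof (induction n)
  case 0
  then show ?case using Rep_z2_bounds[of a 0] Rep_z2_bounds[of a 1] by simp
next
  case (Suc n)
  have "Rep_z2 a (Suc (Suc n)) mod 2 = Rep_z2 a (Suc (Suc n)) mod 2^(Suc n) mod 2"
    by (simp add: mod_mod_cancel)
  also have "\<dots> = Rep_z2 a (Suc n) mod 2"
    using Rep_z2_bounds[of a "Suc n"] by simp
  finally show ?case using Suc by simp
qed

lemma z2_double_eq_0: fixes a :: z2 assumes "a + a = 0" shows "a = 0"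
proof -
  have double: "(Rep_z2 a n + Rep_z2 a n) mod 2^n = 0" for n
    using arg_cong[OF assms, of "\<lambda>x. Rep_z2 x n"] by (simp only: plus_z2.rep_eq zero_z2.rep_eq)
  have "Rep_z2 a n = 0" for n
  proof -
    have "(2::int)^Suc n dvd 2 * Rep_z2 a (Suc n)"
      using double[of "Suc n"] by (simp add: mod_eq_0_iff_dvd)
    then have "(2::int)^n dvd Rep_z2 a (Suc n)" by simp
    then show ?thesis using Rep_z2_bounds[of a n] by (simp add: mod_eq_0_iff_dvd)
  qed
  then have "Rep_z2 a = Rep_z2 0" by (simp add: fun_eq_iff zero_z2.rep_eq)
  then show ?thesis by (simp add: Rep_z2_inject)
qed

lemma z2_one_neq_double: "(1::z2) \<noteq> b + b"
proof
  assume "1 = b + b"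
  then have "Rep_z2 1 1 = Rep_z2 (b + b) 1" by simp
  then have "1 mod 2 = (Rep_z2 b 1 + Rep_z2 b 1) mod (2::int)"
    by (simp only: plus_z2.rep_eq one_z2.rep_eq) simp
  then show False by presburger
qed

lemma z2_even_or_odd: "\<exists>b::z2. a = b + b \<or> a = b + b + 1"
proof -
  define g where "g n = Rep_z2 a (Suc n) div 2" for n
  \<comment> \<open>the coherent sequence of \<open>(a - a\<^sub>1) / 2\<close>\<close>
  have "g \<in> {f. \<forall>n. 0 \<le> f n \<and> f n < 2^n \<and> f (Suc n) mod 2^n = f n}"
  proof (simp, intro allI conjI)
    fix n
    show "0 \<le> g n" using Rep_z2_bounds[of a "Suc n"] by (simp add: g_def)
    have half_less: "x < 2 * m \<Longrightarrow> x div 2 < m" for x m :: int by presburger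
    show "g n < 2^n" using Rep_z2_bounds[of a "Suc n"] unfolding g_def by (simp add: half_less)
    have "g (Suc n) mod 2^n = (Rep_z2 a (Suc (Suc n)) mod 2^Suc n) div 2"
      unfolding g_def by (simp add: zmod_zmult2_eq div_mult2_eq mod_mult2_eq algebra_simps)
    then show "g (Suc n) mod 2^n = g n" using Rep_z2_bounds[of a "Suc n"] by (simp add: g_def)
  qed
  then have Rep_Abs_g: "Rep_z2 (Abs_z2 g) = g" by (simp add: Abs_z2_inverse)
  have a_n: "Rep_z2 a n = (2 * g n + Rep_z2 a 1) mod 2^n" for n
  proof -
    have "Rep_z2 a (Suc n) = 2 * g n + Rep_z2 a (Suc n) mod 2"
      unfolding g_def by simp
    then have "Rep_z2 a (Suc n) = 2 * g n + Rep_z2 a 1"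
      using Rep_z2_Suc_mod_2 by simp
    then show ?thesis using Rep_z2_bounds[of a n] by metis
  qed
  have "Rep_z2 a 1 = 0 \<or> Rep_z2 a 1 = 1" using Rep_z2_bounds[of a 1] by auto
  then show ?thesis
  proof
    assume "Rep_z2 a 1 = 0"
    then have "Rep_z2 (Abs_z2 g + Abs_z2 g) n = Rep_z2 a n" for n
      by (simp only: plus_z2.rep_eq Rep_Abs_g) (simp add: a_n[of n])
    then have "a = Abs_z2 g + Abs_z2 g" by (metis Rep_z2_inject ext)
    then show ?thesis by blast
  next
    assume "Rep_z2 a 1 = 1"
    then have "Rep_z2 (Abs_z2 g + Abs_z2 g + 1) n = Rep_z2 a n" for n
      by (simp only: plus_z2.rep_eq one_z2.rep_eq Rep_Abs_g) (simp add: a_n[of n] mod_add_eq mod_add_left_eq)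
    then have "a = Abs_z2 g + Abs_z2 g + 1" by (metis Rep_z2_inject ext)
    then show ?thesis by blast
  qed
qed

section \<open>Gaussian integers and the prime \<open>\<pi> = 1 + i\<close>\<close>

lemma dvd_mult_diff_one:
  fixes d :: "'a::comm_ring_1"
  assumes "d dvd x - 1" "d dvd y - 1"
  shows "d dvd x * y - 1"
proof -
  have "x * y - 1 = (x - 1) * y + (y - 1)" by (simp add: algebra_simps)
  then show ?thesis using assms by (simp only:) (intro dvd_add dvd_mult2)
qed

lemma gauss_eq_iff: "x = y \<longleftrightarrow> re x = re y \<and> im x = im y"
  by (cases x; cases y) auto

lemma re_im_simps [simp]:
  "re (x + y) = re x + re y" "im (x + y) = im x + im y"
  "re (x - y) = re x - re y" "im (x - y) = im x - im y"
  "re (- x) = - re x" "im (- x) = - im x"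
  "re (x * y) = re x * re y - im x * im y" "im (x * y) = re x * im y + im x * re y"
  "re (0::'a::comm_ring_1 gauss) = 0" "im (0::'a::comm_ring_1 gauss) = 0"
  "re (1::'a::comm_ring_1 gauss) = 1" "im (1::'a::comm_ring_1 gauss) = 0"
  "re (gi::'a::comm_ring_1 gauss) = 0" "im (gi::'a::comm_ring_1 gauss) = 1"
  "re (gof a) = a" "im (gof a) = 0"
  "re (gcnj x) = re x" "im (gcnj x) = - im x"
  by (simp_all add: plus_gauss_def minus_gauss_def uminus_gauss_def times_gauss_def
      zero_gauss_def one_gauss_def gi_def gof_def gcnj_def)

lemma re_im_numeral [simp]:
  "re (numeral n :: 'a::comm_ring_1 gauss) = numeral n" "im (numeral n :: 'a::comm_ring_1 gauss) = 0"
  by (induction n) (simp_all only: numeral_Bit0 numeral_Bit1 numeral_One re_im_simps, simp_all)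

lemma gi_mult_gi: "(gi::'a::comm_ring_1 gauss) * gi = -1"
  by (simp add: gauss_eq_iff)

lemma gcnj_simps [simp]:
  "gcnj (x + y) = gcnj x + gcnj y" "gcnj (x - y) = gcnj x - gcnj y"
  "gcnj (x * y) = gcnj x * gcnj y" "gcnj (- x) = - gcnj x"
  "gcnj (0::'a::comm_ring_1 gauss) = 0" "gcnj (1::'a::comm_ring_1 gauss) = 1"
  "gcnj (gi::'a::comm_ring_1 gauss) = - gi" "gcnj (gof a) = gof a" "gcnj (gcnj x) = x"
  by (simp_all add: gauss_eq_iff algebra_simps)

lemma gcnj_power [simp]: "gcnj (x ^ n) = gcnj x ^ n"
  by (induction n) auto

lemma gcnj_sum: "gcnj (sum f A) = (\<Sum>x\<in>A. gcnj (f x))"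
  using sum_comp_morphism[of gcnj f A] by (simp add: o_def)

lemma gof_simps [simp]:
  "gof (a + b) = gof a + gof b" "gof (a - b) = gof a - gof b" "gof (a * b) = gof a * gof b"
  "gof (- a) = - gof a" "gof (0::'a::comm_ring_1) = 0" "gof (1::'a::comm_ring_1) = 1"
  by (simp_all add: gauss_eq_iff)

lemma gof_unit: "l dvd 1 \<Longrightarrow> gof l dvd 1"
proof -
  assume "l dvd 1"
  then obtain m where "1 = l * m" by (rule dvdE)
  then have "1 = gof l * gof m" by (simp flip: gof_simps)
  then show "gof l dvd 1" by (rule dvdI)
qed

definition gpi :: "'a::comm_ring_1 gauss" (\<open>\<pi>\<close>) where
  "\<pi> = 1 + gi"

lemma gcnj_pi: "gcnj \<pi> = - gi * (\<pi>::'a::comm_ring_1 gauss)"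
  by (simp add: gpi_def gauss_eq_iff algebra_simps)

lemma two_plus_two_i_eq: "(2::'a::comm_ring_1 gauss) + 2 * gi = - gi * \<pi> ^ 3"
  by (simp add: gpi_def gauss_eq_iff algebra_simps power3_eq_cube)

lemma two_plus_two_i_dvd_iff: "(2 + 2 * gi) dvd x \<longleftrightarrow> \<pi> ^ 3 dvd (x::'a::comm_ring_1 gauss)"
proof
  assume "(2 + 2 * gi) dvd x"
  then show "\<pi> ^ 3 dvd x" unfolding two_plus_two_i_eq by (rule dvd_mult_right)
next
  assume "\<pi> ^ 3 dvd x"
  moreover have "\<pi> ^ 3 = (2 + 2 * gi) * (gi::'a gauss)"
    by (simp add: gpi_def gauss_eq_iff algebra_simps power3_eq_cube)
  ultimately show "(2 + 2 * gi) dvd x" by (metis dvd_mult_left)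
qed

lemma pi_dvd_two: "\<pi> dvd (2::'a::comm_ring_1 gauss)"
  unfolding dvd_def by (rule exI[of _ "- gi * \<pi>"]) (simp add: gpi_def gauss_eq_iff)

lemma pi_dvd_if_pi_cube_dvd: "\<pi> ^ 3 dvd x \<Longrightarrow> \<pi> dvd (x::'a::comm_ring_1 gauss)"
proof -
  assume "\<pi> ^ 3 dvd x"
  then have "\<pi> * (\<pi> * \<pi>) dvd x" by (simp add: power3_eq_cube mult.assoc)
  then show "\<pi> dvd x" by (rule dvd_mult_left)
qed

lemma pi_dvd_gcnj_diff: "\<pi> dvd (gcnj x - x)"
proof -
  have "gcnj x - x = - (2 * (gi * gof (im x)))" by (simp add: gauss_eq_iff)
  then show ?thesis using dvd_mult2[OF pi_dvd_two] by simp
qed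

lemma pi_power_dvd_gcnj: "\<pi> ^ n dvd x \<Longrightarrow> \<pi> ^ n dvd gcnj x"
proof -
  assume "\<pi> ^ n dvd x"
  then obtain y where "x = \<pi> ^ n * y" by (rule dvdE)
  then have "gcnj x = (- gi * \<pi>) ^ n * gcnj y"
    by (simp only: gcnj_simps(3) gcnj_power gcnj_pi)
  also have "\<dots> = \<pi> ^ n * ((- gi) ^ n * gcnj y)"
    by (simp only: power_mult_distrib mult_ac)
  finally show ?thesis by simp
qed

lemma pi_power_dvd_norm_diff_one:
  "\<pi> ^ n dvd x - 1 \<Longrightarrow> \<pi> ^ n dvd x * gcnj x - (1::'a::comm_ring_1 gauss)"
  using dvd_mult_diff_one pi_power_dvd_gcnj[of n "x - 1"] by simp

lemma pi_mult_norm: "(\<pi> * a) * gcnj (\<pi> * a) = \<pi> * \<pi> * (- gi * (a * gcnj (a::'a::comm_ring_1 gauss)))"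
  by (simp add: gcnj_pi algebra_simps)

definition fourth_roots :: "'a::comm_ring_1 gauss set" where
  "fourth_roots = {1, -1, gi, - gi}"

lemma fourth_roots_mult_gcnj: "u \<in> fourth_roots \<Longrightarrow> u * gcnj u = 1"
  by (auto simp: fourth_roots_def gi_mult_gi)

lemma fourth_roots_gcnj: "u \<in> fourth_roots \<Longrightarrow> gcnj u \<in> fourth_roots"
  by (auto simp: fourth_roots_def)

lemma fourth_roots_mult: "u \<in> fourth_roots \<Longrightarrow> v \<in> fourth_roots \<Longrightarrow> u * v \<in> fourth_roots"
  by (auto simp: fourth_roots_def gi_mult_gi)

section \<open>Reduction modulo \<open>\<pi>\<close> in \<open>\<int>\<^sub>2[i]\<close>\<close>

type_synonym gz2 = "z2 gauss"

lemma pi_not_dvd_one: "\<not> \<pi> dvd (1::gz2)"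
proof
  assume "\<pi> dvd (1::gz2)"
  then obtain y :: gz2 where y: "1 = \<pi> * y" by (rule dvdE)
  have "re y + re y = re (\<pi> * y) + im (\<pi> * y)" by (simp add: gpi_def algebra_simps)
  then have "1 = re y + re y" using y[symmetric] by simp
  then show False using z2_one_neq_double by blast
qed

lemma pi_mult_eq_0: "\<pi> * (x::gz2) = 0 \<Longrightarrow> x = 0"
proof -
  assume "\<pi> * x = 0"
  moreover have "2 * x = (1 - gi) * (\<pi> * x)" by (simp add: gpi_def gauss_eq_iff algebra_simps)
  ultimately have "re x + re x = 0" "im x + im x = 0"
    by (simp_all add: gauss_eq_iff flip: mult_2)
  then show "x = 0" by (simp add: gauss_eq_iff z2_double_eq_0)
qed

lemma pi_mult_left_cancel: "\<pi> * (x::gz2) = \<pi> * y \<longleftrightarrow> x = y"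
  using pi_mult_eq_0[of "x - y"] by (auto simp: algebra_simps)

lemma pi_dvd_mult_cancel: "\<pi> * x dvd \<pi> * (y::gz2) \<Longrightarrow> x dvd y"
proof -
  assume "\<pi> * x dvd \<pi> * y"
  then obtain k where "\<pi> * y = \<pi> * x * k" by (rule dvdE)
  then have "y = x * k" by (simp add: mult.assoc pi_mult_left_cancel)
  then show "x dvd y" by simp
qed

lemma pi_dvd_or_pi_dvd_diff_one: "\<pi> dvd (x::gz2) \<or> \<pi> dvd (x - 1)"
proof -
  obtain a where a: "re x = a + a \<or> re x = a + a + 1" using z2_even_or_odd by blast
  obtain b where b: "im x = b + b \<or> im x = b + b + 1" using z2_even_or_odd by blast
  define y where "y = gof a + gi * gof b"
  from a b consider "x = 2 * y" | "x - 1 = 2 * y + gi * \<pi>" | "x - 1 = 2 * y" | "x = 2 * y + \<pi>"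
    by (elim disjE) (simp_all add: gauss_eq_iff y_def gpi_def)
  moreover have "\<pi> dvd 2 * y" using pi_dvd_two by (rule dvd_mult2)
  ultimately show ?thesis by cases simp_all
qed

text \<open>The residue field \<open>\<int>\<^sub>2[i]/(\<pi>)\<close> is encoded as \<open>bool\<close>, with exclusive or as addition:
  \<open>unit_mod_pi\<close> is the reduction map.\<close>

definition unit_mod_pi :: "gz2 \<Rightarrow> bool" where
  "unit_mod_pi x \<longleftrightarrow> \<not> \<pi> dvd x"

lemma unit_mod_pi_iff: "unit_mod_pi x \<longleftrightarrow> \<pi> dvd x - 1"
proof
  assume "unit_mod_pi x"
  then show "\<pi> dvd x - 1" using pi_dvd_or_pi_dvd_diff_one unit_mod_pi_def by blast
next
  assume "\<pi> dvd x - 1"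
  moreover have "\<not> \<pi> dvd x - (x - 1)" using pi_not_dvd_one by simp
  ultimately show "unit_mod_pi x" unfolding unit_mod_pi_def using dvd_diff by blast
qed

lemma unit_mod_pi_simps [simp]:
  "unit_mod_pi 1" "\<not> unit_mod_pi 0" "\<not> unit_mod_pi \<pi>"
  "unit_mod_pi (- x) \<longleftrightarrow> unit_mod_pi x"
  by (simp_all add: unit_mod_pi_def pi_not_dvd_one)

lemma unit_mod_pi_mult [simp]: "unit_mod_pi (x * y) \<longleftrightarrow> unit_mod_pi x \<and> unit_mod_pi y"
proof
  assume "unit_mod_pi x \<and> unit_mod_pi y"
  then have "\<pi> dvd (x - 1) * y + (y - 1)" by (simp add: unit_mod_pi_iff)
  then show "unit_mod_pi (x * y)" by (simp add: unit_mod_pi_iff algebra_simps)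
qed (auto simp: unit_mod_pi_def)

lemma unit_mod_pi_add [simp]: "unit_mod_pi (x + y) \<longleftrightarrow> unit_mod_pi x \<noteq> unit_mod_pi y"
proof -
  have split: "x + y - 1 = x + (y - 1)" "x + y - 1 = (x - 1) + y" "x + y = (x - 1) + (y - 1) + 2"
    by (simp_all add: algebra_simps)
  consider "\<pi> dvd x" "\<pi> dvd y" | "\<pi> dvd x" "\<pi> dvd y - 1" | "\<pi> dvd x - 1" "\<pi> dvd y"
    | "\<pi> dvd x - 1" "\<pi> dvd y - 1"
    using pi_dvd_or_pi_dvd_diff_one[of x] pi_dvd_or_pi_dvd_diff_one[of y] by blast
  then show ?thesis
  proof cases
    case 1
    then show ?thesis by (simp add: unit_mod_pi_def)
  next
    case 2
    then have "\<pi> dvd x + y - 1" by (simp only: split(1)) (rule dvd_add)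
    with 2 show ?thesis by (simp add: unit_mod_pi_def flip: unit_mod_pi_iff)
  next
    case 3
    then have "\<pi> dvd x + y - 1" by (simp only: split(2)) (rule dvd_add)
    with 3 show ?thesis by (simp add: unit_mod_pi_def flip: unit_mod_pi_iff)
  next
    case 4
    then have "\<pi> dvd x + y" by (simp only: split(3)) (intro dvd_add pi_dvd_two)
    with 4 show ?thesis by (simp add: unit_mod_pi_def flip: unit_mod_pi_iff)
  qed
qed

lemma unit_mod_pi_diff [simp]: "unit_mod_pi (x - y) \<longleftrightarrow> unit_mod_pi x \<noteq> unit_mod_pi y"
  using unit_mod_pi_add[of x "- y"] by simp

lemma unit_mod_pi_gi [simp]: "unit_mod_pi gi"
  using unit_mod_pi_mult[of gi gi] by (simp add: gi_mult_gi)

lemma unit_mod_pi_gcnj [simp]: "unit_mod_pi (gcnj x) \<longleftrightarrow> unit_mod_pi x"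
  using unit_mod_pi_add[of "gcnj x - x" x] pi_dvd_gcnj_diff[of x] by (simp add: unit_mod_pi_def)

lemma unit_mod_pi_unit: "u dvd 1 \<Longrightarrow> unit_mod_pi u"
proof -
  assume "u dvd 1"
  then obtain v where "1 = u * v" by (rule dvdE)
  then have "unit_mod_pi (u * v)" by (simp flip: \<open>1 = u * v\<close>)
  then show "unit_mod_pi u" by simp
qed

definition pi_quot :: "gz2 \<Rightarrow> gz2" where
  "pi_quot x = (SOME a. x = \<pi> * a)"

lemma pi_quot: "\<pi> dvd x \<Longrightarrow> x = \<pi> * pi_quot x"
  unfolding pi_quot_def by (rule someI_ex) (auto elim: dvdE)

lemma pi_cube_dvd_pi_squared_mult: "\<pi> ^ 3 dvd \<pi> * \<pi> * y \<Longrightarrow> \<pi> dvd (y::gz2)"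
  by (rule pi_dvd_mult_cancel, rule pi_dvd_mult_cancel) (simp add: power3_eq_cube mult.assoc)

text \<open>The units \<open>\<plusminus>1, \<plusminus>i\<close> represent \<open>(\<int>\<^sub>2[i]/(\<pi>\<^sup>3))\<^sup>\<times>\<close>: every unit modulo \<open>\<pi>\<close> becomes
  congruent to \<open>1\<close> modulo \<open>\<pi>\<^sup>3\<close> after multiplication by exactly one of them.\<close>

lemma fourth_root_normalises:
  assumes "unit_mod_pi x"
  shows "\<exists>u\<in>fourth_roots. \<pi> ^ 3 dvd x * u - 1"
proof -
  have digit: "\<exists>t'. t = \<pi> * t' \<or> t = 1 + \<pi> * t'" for t :: gz2
  proof (cases "\<pi> dvd t")
    case False
    then obtain t' where "t - 1 = \<pi> * t'" using pi_dvd_or_pi_dvd_diff_one[of t] by (auto elim: dvdE)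
    then have "t = 1 + \<pi> * t'" by (simp add: algebra_simps)
    then show ?thesis by blast
  qed (auto elim: dvdE)
  obtain t where "x - 1 = \<pi> * t" using assms unfolding unit_mod_pi_iff by (rule dvdE)
  then have x: "x = 1 + \<pi> * t" by (simp add: algebra_simps)
  obtain t' where t: "t = \<pi> * t' \<or> t = 1 + \<pi> * t'" using digit by blast
  obtain s where t': "t' = \<pi> * s \<or> t' = 1 + \<pi> * s" using digit by blast
  from t t' have "\<exists>u\<in>fourth_roots. \<exists>c. x * u - 1 = \<pi> ^ 3 * c"
  proof (elim disjE)
    assume "t = \<pi> * t'" "t' = \<pi> * s"
    then have "x * 1 - 1 = \<pi> ^ 3 * s" using x by (simp add: power3_eq_cube)
    then show ?thesis unfolding fourth_roots_def by blast
  next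
    assume "t = \<pi> * t'" "t' = 1 + \<pi> * s"
    then have "x = 1 + \<pi> * (\<pi> * (1 + \<pi> * s))" using x by simp
    then have "x * (- 1) - 1 = \<pi> ^ 3 * (gi - s)"
      by (simp add: gpi_def gauss_eq_iff algebra_simps power3_eq_cube)
    then show ?thesis unfolding fourth_roots_def by blast
  next
    assume "t = 1 + \<pi> * t'" "t' = \<pi> * s"
    then have "x = 1 + \<pi> * (1 + \<pi> * (\<pi> * s))" using x by simp
    then have "x * gi - 1 = \<pi> ^ 3 * (1 + s * gi)"
      by (simp add: gpi_def gauss_eq_iff algebra_simps power3_eq_cube)
    then show ?thesis unfolding fourth_roots_def by blast
  next
    assume "t = 1 + \<pi> * t'" "t' = 1 + \<pi> * s"
    then have "x = 1 + \<pi> * (1 + \<pi> * (1 + \<pi> * s))" using x by simp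
    then have "x * (- gi) - 1 = \<pi> ^ 3 * (- 1 - s * gi)"
      by (simp add: gpi_def gauss_eq_iff algebra_simps power3_eq_cube)
    then show ?thesis unfolding fourth_roots_def by blast
  qed
  then show ?thesis by (auto simp: dvd_def)
qed

lemma fourth_root_congruent_one:
  assumes u: "u \<in> fourth_roots" and dvd: "\<pi> ^ 3 dvd u - 1"
  shows "u = (1::gz2)"
proof (rule ccontr)
  have not_dvd: "\<not> \<pi> ^ 3 dvd \<pi> * c" if "unit_mod_pi c" for c :: gz2
  proof
    assume "\<pi> ^ 3 dvd \<pi> * c"
    then have "\<pi> * (\<pi> * \<pi>) dvd \<pi> * c" by (simp add: power3_eq_cube mult.assoc)
    then have "\<pi> * \<pi> dvd c" by (rule pi_dvd_mult_cancel)
    then have "\<pi> dvd c" by (rule dvd_mult_left)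
    with that show False by (simp add: unit_mod_pi_def)
  qed
  assume "u \<noteq> 1"
  with u consider "u = -1" | "u = gi" | "u = - gi" by (auto simp: fourth_roots_def)
  then show False
  proof cases
    case 1
    then have "u - 1 = \<pi> * \<pi> * gi" by (simp add: gpi_def gauss_eq_iff)
    then have "\<pi> ^ 3 dvd \<pi> * \<pi> * (gi::gz2)" using dvd by simp
    then have "\<pi> dvd (gi::gz2)" by (rule pi_cube_dvd_pi_squared_mult)
    then show False using unit_mod_pi_gi unfolding unit_mod_pi_def by blast
  next
    case 2
    then have "u - 1 = \<pi> * gi" by (simp add: gpi_def gauss_eq_iff)
    then show False using dvd not_dvd[of gi] by simp
  next
    case 3
    then have "u - 1 = \<pi> * (-1)" by (simp add: gpi_def gauss_eq_iff)
    then show False using dvd not_dvd[of "-1"] by simp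
  qed
qed

lemma mat_matrix_mult_nth: "(mat c ** A) $ i $ j = c * A $ i $ j"
  by (simp add: matrix_matrix_mult_def mat_def if_distrib if_distribR sum.delta cong: if_cong)

lemma matrix_mat_mult_nth: "(A ** mat c) $ i $ j = A $ i $ j * c"
  by (simp add: matrix_matrix_mult_def mat_def if_distrib if_distribR sum.delta' cong: if_cong)

lemma mat_mult_commute: "mat c ** A = A ** mat (c::'a::comm_semiring_1)"
  by (simp add: vec_eq_iff mat_matrix_mult_nth matrix_mat_mult_nth mult.commute)

lemma matrix_mul_mat_left_commute: "A ** (mat c ** B) = mat (c::'a::comm_semiring_1) ** (A ** B)"
proof -
  have "A ** (mat c ** B) = (A ** B) ** mat c"
    by (simp only: mat_mult_commute[of c B] matrix_mul_assoc)
  then show ?thesis by (simp only: mat_mult_commute[of c "A ** B"])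
qed

lemma mat_mult_mat: "mat c ** mat d = mat (c * d)"
  by (simp add: vec_eq_iff mat_matrix_mult_nth) (simp add: mat_def)

lemma ctrans_nth [simp]: "ctrans A $ i $ j = gcnj (A $ j $ i)"
  by (simp add: ctrans_def)

lemma ctrans_ctrans [simp]: "ctrans (ctrans A) = A"
  by (simp add: vec_eq_iff)

lemma ctrans_mult: "ctrans (A ** B) = ctrans B ** ctrans A"
  by (simp add: vec_eq_iff matrix_matrix_mult_def gcnj_sum mult.commute)

lemma ctrans_mat: "ctrans (mat c) = mat (gcnj c)"
  by (simp add: vec_eq_iff mat_def)

definition monomial_matrix :: "('n \<Rightarrow> 'n) \<Rightarrow> ('n \<Rightarrow> 'a::zero) \<Rightarrow> 'a ^ 'n ^ 'n" where
  "monomial_matrix \<sigma> u = (\<chi> k l. if l = \<sigma> k then u k else 0)"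

lemma monomial_matrix_nth: "monomial_matrix \<sigma> u $ k $ l = (if l = \<sigma> k then u k else 0)"
  by (simp add: monomial_matrix_def)

lemma monomial_matrix_mult_nth:
  "(monomial_matrix \<sigma> u ** B) $ k $ l = u k * B $ \<sigma> k $ (l::'n::finite)"
  by (simp add: matrix_matrix_mult_def monomial_matrix_nth if_distrib if_distribR sum.delta' cong: if_cong)

lemma monomial_matrix_mult:
  "monomial_matrix \<sigma> u ** monomial_matrix \<tau> v
     = monomial_matrix (\<tau> \<circ> \<sigma>) (\<lambda>k. u k * v (\<sigma> k) :: 'a::semiring_1)"
  by (simp add: vec_eq_iff monomial_matrix_mult_nth monomial_matrix_nth)

lemma monomial_matrix_id: "monomial_matrix id (\<lambda>_. 1) = mat 1"
  by (simp add: vec_eq_iff monomial_matrix_nth mat_def)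

lemma ctrans_monomial_matrix:
  assumes "bij \<sigma>"
  shows "ctrans (monomial_matrix \<sigma> u) = monomial_matrix (inv_into UNIV \<sigma>) (\<lambda>k. gcnj (u (inv_into UNIV \<sigma> k)))"
  using assms bij_is_inj[OF assms] by (auto simp: vec_eq_iff monomial_matrix_nth bij_inv_eq_iff inv_f_f)

lemma matrix_mult_ctrans_monomial_nth:
  "(B ** ctrans (monomial_matrix \<sigma> u)) $ k $ l = B $ k $ \<sigma> l * gcnj (u l)"
  by (simp add: matrix_matrix_mult_def monomial_matrix_nth if_distrib if_distribR sum.delta cong: if_cong)

lemma sum_UNIV_3_distinct:
  assumes "k \<noteq> l" "k \<noteq> m" "l \<noteq> (m::3)"
  shows "sum f UNIV = f k + f l + f m"
proof -
  have "card {k, l, m} = 3" using assms by simp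
  then have "{k, l, m} = (UNIV::3 set)" by (intro card_subset_eq) auto
  then show ?thesis using assms by (simp flip: \<open>{k, l, m} = UNIV\<close> add: add.assoc)
qed

lemma ctrans_mult_nth_3:
  assumes "k \<noteq> l" "k \<noteq> m" "l \<noteq> m"
  shows "(A ** ctrans A) $ i $ j
    = A $ i $ k * gcnj (A $ j $ k) + A $ i $ l * gcnj (A $ j $ l) + A $ i $ m * gcnj (A $ j $ m)"
  by (simp add: matrix_matrix_mult_def sum_UNIV_3_distinct[OF assms])

lemma GU3_Z2_similitude:
  assumes "A \<in> GU3_Z2"
  obtains l where "l dvd 1" "A ** ctrans A = mat (gof l)" "ctrans A ** A = mat (gof l)"
proof -
  from assms obtain l where l: "l dvd 1" "A ** ctrans A = mat (gof l)" and "invertible A"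
    by (auto simp: GU3_Z2_def)
  then obtain A' where A': "A ** A' = mat 1" "A' ** A = mat 1" by (auto simp: invertible_def)
  have "ctrans A ** A = (A' ** (A ** ctrans A)) ** A"
    by (simp add: matrix_mul_assoc A'(2))
  also have "\<dots> = (A' ** mat (gof l)) ** A"
    by (simp only: l(2))
  also have "\<dots> = mat (gof l) ** (A' ** A)"
    by (simp only: mat_mult_commute[of _ A', symmetric] matrix_mul_assoc[symmetric])
  finally have "ctrans A ** A = mat (gof l)" by (simp add: A'(2))
  with l that show ?thesis by blast
qed

lemma similitude_inverse:
  fixes A :: mat3
  assumes "A ** ctrans A = mat (gof l)" "ctrans A ** A = mat (gof l)" "l * m = 1"
  shows "(mat (gof m) ** ctrans A) ** A = mat 1" "A ** (mat (gof m) ** ctrans A) = mat 1"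
proof -
  have "gof m * gof l = gof (l * m)" by (simp add: mult.commute)
  then have ml: "gof m * gof l = 1" using assms(3) by simp
  show "(mat (gof m) ** ctrans A) ** A = mat 1"
    using assms(2) ml by (simp add: matrix_mul_assoc[symmetric] mat_mult_mat)
  show "A ** (mat (gof m) ** ctrans A) = mat 1"
    using assms(1) ml by (simp add: matrix_mul_mat_left_commute mat_mult_mat)
qed

lemma GU3_Z2_inverse:
  assumes "A ** ctrans A = mat (gof l)" "ctrans A ** A = mat (gof l)" "l * m = 1"
  shows "mat (gof m) ** ctrans A \<in> GU3_Z2"
proof -
  let ?B = "mat (gof m) ** ctrans A"
  have "?B ** ctrans ?B = mat (gof m) ** ((ctrans A ** A) ** mat (gof m))"
    by (simp add: ctrans_mult ctrans_mat matrix_mul_assoc)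
  also have "\<dots> = mat (gof (m * (l * m)))"
    by (simp add: assms(2) mat_mult_mat mult.assoc)
  finally have "?B ** ctrans ?B = mat (gof m)" using assms(3) by simp
  moreover have "m dvd 1" using assms(3) by (metis dvdI mult.commute)
  moreover have "invertible ?B"
    using similitude_inverse[OF assms] unfolding invertible_def by blast
  ultimately show ?thesis unfolding GU3_Z2_def by blast
qed

lemma GU3_Z2_mult:
  assumes A: "A \<in> GU3_Z2" and B: "B \<in> GU3_Z2"
  shows "A ** B \<in> GU3_Z2"
proof -
  obtain l where l: "l dvd 1" "A ** ctrans A = mat (gof l)" "ctrans A ** A = mat (gof l)"
    using A by (rule GU3_Z2_similitude)
  obtain k where k: "k dvd 1" "B ** ctrans B = mat (gof k)" "ctrans B ** B = mat (gof k)"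
    using B by (rule GU3_Z2_similitude)
  have "(A ** B) ** ctrans (A ** B) = A ** (B ** ctrans B) ** ctrans A"
    by (simp add: ctrans_mult matrix_mul_assoc)
  also have "\<dots> = mat (gof k) ** (A ** ctrans A)"
    by (simp only: k(2) mat_mult_commute[of _ A, symmetric] matrix_mul_assoc[symmetric])
  also have "\<dots> = mat (gof (l * k))"
    by (simp add: l(2) mat_mult_mat mult.commute)
  finally have "(A ** B) ** ctrans (A ** B) = mat (gof (l * k))" .
  moreover have "invertible (A ** B)"
    using A B by (intro invertible_mult) (simp_all add: GU3_Z2_def)
  moreover have "l * k dvd 1" using mult_dvd_mono[OF l(1) k(1)] by simp
  ultimately show ?thesis unfolding GU3_Z2_def by blast
qed

lemma GU3_Z2_grp_simps [simp]:
  "carrier GU3_Z2_grp = GU3_Z2" "x \<otimes>\<^bsub>GU3_Z2_grp\<^esub> y = x ** y" "\<one>\<^bsub>GU3_Z2_grp\<^esub> = mat 1"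
  by (simp_all add: GU3_Z2_grp_def)

lemma group_GU3_Z2: "group GU3_Z2_grp"
proof (rule groupI, simp_all only: GU3_Z2_grp_simps)
  show "mat 1 \<in> GU3_Z2"
    unfolding GU3_Z2_def invertible_def by (auto simp: ctrans_mat intro!: exI[of _ 1] exI[of _ "mat 1"])
  show "\<exists>y\<in>GU3_Z2. y ** x = mat 1" if x: "x \<in> GU3_Z2" for x
  proof -
    obtain l where l: "l dvd 1" "x ** ctrans x = mat (gof l)" "ctrans x ** x = mat (gof l)"
      using x by (rule GU3_Z2_similitude)
    obtain m where "1 = l * m" using l(1) by (rule dvdE)
    with l show ?thesis using GU3_Z2_inverse similitude_inverse by (metis (no_types))
  qed
qed (simp_all add: GU3_Z2_mult matrix_mul_assoc)

lemma inv_GU3_Z2: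
  assumes "A \<in> GU3_Z2" "A ** ctrans A = mat (gof l)" "ctrans A ** A = mat (gof l)" "l * m = 1"
  shows "inv\<^bsub>GU3_Z2_grp\<^esub> A = mat (gof m) ** ctrans A"
  using group.inv_equality[OF group_GU3_Z2] assms GU3_Z2_inverse[OF assms(2-4)]
    similitude_inverse[OF assms(2-4)] by simp

lemma GU3_Z_eq: "GU3_Z = {monomial_matrix \<sigma> u | \<sigma> u. bij \<sigma> \<and> (\<forall>k. u k \<in> fourth_roots)}"
proof -
  have "(\<forall>k l. g $ k $ l = (if l = \<sigma> k then u k else 0)) \<longleftrightarrow> g = monomial_matrix \<sigma> u"
    for \<sigma> u and g :: mat3
    by (simp add: vec_eq_iff monomial_matrix_nth)
  then show ?thesis unfolding GU3_Z_def fourth_roots_def by blast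
qed

lemma monomial_matrix_unitary:
  assumes "bij \<sigma>" "\<forall>k. u k \<in> fourth_roots"
  shows "monomial_matrix \<sigma> u ** ctrans (monomial_matrix \<sigma> u) = mat 1"
    "ctrans (monomial_matrix \<sigma> u) ** monomial_matrix \<sigma> u = mat 1"
  using assms fourth_roots_mult_gcnj[of "u _"]
  by (simp_all add: ctrans_monomial_matrix monomial_matrix_mult bij_is_inj bij_is_surj
      surj_iff[THEN iffD1] mult.commute flip: monomial_matrix_id)

lemma GU3_Z_subset: "GU3_Z \<subseteq> GU3_Z2"
proof
  fix M assume "M \<in> GU3_Z"
  then obtain \<sigma> u where M: "M = monomial_matrix \<sigma> u" "bij \<sigma>" "\<forall>k. u k \<in> fourth_roots"
    by (auto simp: GU3_Z_eq)
  then have "M ** ctrans M = mat (gof 1)" "invertible M"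
    using monomial_matrix_unitary[OF M(2,3)] unfolding invertible_def by auto
  then show "M \<in> GU3_Z2" unfolding GU3_Z2_def by (intro CollectI conjI exI[of _ 1]) auto
qed

lemma ctrans_GU3_Z: "M \<in> GU3_Z \<Longrightarrow> ctrans M \<in> GU3_Z"
proof -
  assume "M \<in> GU3_Z"
  then obtain \<sigma> u where M: "M = monomial_matrix \<sigma> u" "bij \<sigma>" "\<forall>k. u k \<in> fourth_roots"
    by (auto simp: GU3_Z_eq)
  then show ?thesis
    unfolding GU3_Z_eq
    by (auto simp: ctrans_monomial_matrix bij_imp_bij_inv fourth_roots_gcnj
        intro!: exI[of _ "inv_into UNIV \<sigma>"])
qed

lemma inv_GU3_Z: "M \<in> GU3_Z \<Longrightarrow> inv\<^bsub>GU3_Z2_grp\<^esub> M = ctrans M"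
proof -
  assume "M \<in> GU3_Z"
  then obtain \<sigma> u where M: "M = monomial_matrix \<sigma> u" "bij \<sigma>" "\<forall>k. u k \<in> fourth_roots"
    by (auto simp: GU3_Z_eq)
  then have "M ** ctrans M = mat (gof 1)" "ctrans M ** M = mat (gof 1)"
    using monomial_matrix_unitary[OF M(2,3)] by simp_all
  with \<open>M \<in> GU3_Z\<close> show ?thesis using inv_GU3_Z2[of M 1 1] GU3_Z_subset by auto
qed

lemma one_GU3_Z: "mat 1 \<in> GU3_Z"
  unfolding GU3_Z_eq by (auto simp: fourth_roots_def monomial_matrix_id[symmetric] intro!: exI[of _ id])

lemma subgroup_GU3_Z: "subgroup GU3_Z GU3_Z2_grp"
proof (rule group.subgroupI[OF group_GU3_Z2])
  show "GU3_Z \<subseteq> carrier GU3_Z2_grp" using GU3_Z_subset by simp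
  show "GU3_Z \<noteq> {}" using one_GU3_Z by blast
  show "inv\<^bsub>GU3_Z2_grp\<^esub> M \<in> GU3_Z" if "M \<in> GU3_Z" for M
    using that inv_GU3_Z ctrans_GU3_Z by simp
  show "M \<otimes>\<^bsub>GU3_Z2_grp\<^esub> N \<in> GU3_Z" if "M \<in> GU3_Z" and "N \<in> GU3_Z" for M N
  proof -
    obtain \<sigma> u where M: "M = monomial_matrix \<sigma> u" "bij \<sigma>" "\<forall>k. u k \<in> fourth_roots"
      using \<open>M \<in> GU3_Z\<close> by (auto simp: GU3_Z_eq)
    obtain \<tau> v where N: "N = monomial_matrix \<tau> v" "bij \<tau>" "\<forall>k. v k \<in> fourth_roots"
      using \<open>N \<in> GU3_Z\<close> by (auto simp: GU3_Z_eq)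
    show ?thesis
      unfolding GU3_Z_eq using M N
      by (auto simp: monomial_matrix_mult bij_comp fourth_roots_mult
          intro!: exI[of _ "\<tau> \<circ> \<sigma>"] exI[of _ "\<lambda>k. u k * v (\<sigma> k)"])
  qed
qed

text \<open>Over the field \<open>\<bool>\<close> (exclusive or as addition), a \<open>3 \<times> 3\<close> matrix whose rows have odd
  weight and are pairwise orthogonal is a permutation matrix.\<close>

lemma boolean_orthonormal_rows_3:
  fixes b :: "3 \<Rightarrow> 3 \<Rightarrow> bool"
  assumes odd: "\<And>k. (b k 1 \<noteq> b k 2) \<noteq> b k 3"
    and orth: "\<And>k m. k \<noteq> m \<Longrightarrow> \<not> (((b k 1 \<and> b m 1) \<noteq> (b k 2 \<and> b m 2)) \<noteq> (b k 3 \<and> b m 3))"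
  shows "\<exists>j. b k j" and "b k j \<Longrightarrow> b k j' \<Longrightarrow> j = j'" and "b k j \<Longrightarrow> b l j \<Longrightarrow> k = l"
proof -
  show "\<exists>j. b k j" using odd[of k] by blast
  have distinct: "(1::3) \<noteq> 2" "(1::3) \<noteq> 3" "(2::3) \<noteq> 3" by simp_all
  have "\<not> (b k j \<and> b k j')" "\<not> (b j k \<and> b j' k)" if "j \<noteq> j'" for k j j'
    using odd[of 1] odd[of 2] odd[of 3] orth[OF distinct(1)] orth[OF distinct(2)] orth[OF distinct(3)]
      that exhaust_3[of k] exhaust_3[of j] exhaust_3[of j'] by auto
  then show "b k j \<Longrightarrow> b k j' \<Longrightarrow> j = j'" "b k j \<Longrightarrow> b l j \<Longrightarrow> k = l" by blast+
qed

lemma GU3_Z2_mod_pi_permutation: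
  assumes "A \<in> GU3_Z2"
  obtains \<sigma> where "bij \<sigma>" "\<forall>k j. unit_mod_pi (A $ k $ j) \<longleftrightarrow> j = \<sigma> k"
proof -
  obtain l where l: "l dvd 1" "A ** ctrans A = mat (gof l)" using assms by (rule GU3_Z2_similitude)
  have rows: "(\<Sum>j\<in>UNIV. A $ k $ j * gcnj (A $ m $ j)) = (if k = m then gof l else 0)" for k m
    using arg_cong[OF l(2), of "\<lambda>M. M $ k $ m"] by (simp add: matrix_matrix_mult_def mat_def)
  let ?b = "\<lambda>k j. unit_mod_pi (A $ k $ j)"
  have odd: "(?b k 1 \<noteq> ?b k 2) \<noteq> ?b k 3" for k
  proof -
    have "unit_mod_pi (\<Sum>j\<in>UNIV. A $ k $ j * gcnj (A $ k $ j))"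
      using rows[of k k] unit_mod_pi_unit[OF gof_unit[OF l(1)]] by simp
    then show ?thesis by (simp add: sum_3)
  qed
  have orth: "\<not> (((?b k 1 \<and> ?b m 1) \<noteq> (?b k 2 \<and> ?b m 2)) \<noteq> (?b k 3 \<and> ?b m 3))" if "k \<noteq> m" for k m
  proof -
    have "\<not> unit_mod_pi (\<Sum>j\<in>UNIV. A $ k $ j * gcnj (A $ m $ j))"
      using rows[of k m] that by simp
    then show ?thesis by (simp add: sum_3)
  qed
  note perm = boolean_orthonormal_rows_3[of ?b, OF odd orth]
  from perm(1) have "\<forall>k. \<exists>j. ?b k j" by blast
  then obtain \<sigma> where \<sigma>: "\<And>k. ?b k (\<sigma> k)" by (metis choice)
  have "inj \<sigma>" using \<sigma> perm(3) by (metis injI)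
  then have "bij \<sigma>" using finite_UNIV_inj_surj[of \<sigma>] by (simp add: bij_def)
  moreover have "?b k j \<longleftrightarrow> j = \<sigma> k" for k j using \<sigma> perm(2) by blast
  ultimately show ?thesis using that by blast
qed

section \<open>The subgroup \<open>K\<^sub>2~\<close> and the decomposition\<close>

lemma K2t_iff: "A \<in> K2t \<longleftrightarrow> A \<in> GU3_Z2 \<and> (\<forall>k. \<pi> ^ 3 dvd A $ k $ k - 1)"
  by (simp add: K2t_def two_plus_two_i_dvd_iff)

lemma K2t_diag_unit: "A \<in> K2t \<Longrightarrow> unit_mod_pi (A $ k $ k)"
  by (simp add: K2t_iff unit_mod_pi_iff pi_dvd_if_pi_cube_dvd)

lemma K2t_offdiag_dvd:
  assumes A: "A \<in> K2t" and "k \<noteq> l"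
  shows "\<pi> dvd A $ k $ l"
proof -
  obtain \<sigma> where "\<forall>k j. unit_mod_pi (A $ k $ j) \<longleftrightarrow> j = \<sigma> k"
    using A unfolding K2t_iff by (elim conjE GU3_Z2_mod_pi_permutation)
  then have \<sigma>: "unit_mod_pi (A $ k $ j) \<longleftrightarrow> j = \<sigma> k" for k j by blast
  then have "\<sigma> k = k" using K2t_diag_unit[OF A, of k] by simp
  then show ?thesis using \<sigma>[of k l] \<open>k \<noteq> l\<close> by (simp add: unit_mod_pi_def)
qed

text \<open>Meaningful only when \<open>\<pi>\<close> divides \<open>A\<^sub>k\<^sub>l\<close>, as for the off-diagonal entries of
  \<open>A \<in> K\<^sub>2~\<close>: it is then the residue of \<open>A\<^sub>k\<^sub>l / \<pi>\<close> modulo \<open>\<pi>\<close>.\<close>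

definition offdiag_residue :: "mat3 \<Rightarrow> 3 \<Rightarrow> 3 \<Rightarrow> bool" where
  "offdiag_residue A k l \<longleftrightarrow> unit_mod_pi (pi_quot (A $ k $ l))"

lemma K2t_offdiag_eq: "A \<in> K2t \<Longrightarrow> k \<noteq> l \<Longrightarrow> A $ k $ l = \<pi> * pi_quot (A $ k $ l)"
  by (rule pi_quot) (rule K2t_offdiag_dvd)

text \<open>Entry \<open>(k, l)\<close> of \<open>A A\<^sup>* = \<lambda>I\<close> read modulo \<open>\<pi>\<^sup>2\<close>, where \<open>-i \<equiv> 1\<close> and conjugation is trivial.\<close>

lemma K2t_offdiag_residue_sym:
  assumes A: "A \<in> K2t" and d: "k \<noteq> l" "k \<noteq> m" "l \<noteq> m"
  shows "offdiag_residue A k l = offdiag_residue A l k"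
proof -
  obtain lam where "A ** ctrans A = mat (gof lam)"
    using A unfolding K2t_iff by (metis GU3_Z2_similitude)
  then have "(A ** ctrans A) $ k $ l = 0" using d by (simp add: mat_def)
  then have sum0: "A$k$k * gcnj (A$l$k) + A$k$l * gcnj (A$l$l) + A$k$m * gcnj (A$l$m) = 0"
    by (simp only: ctrans_mult_nth_3[OF d])
  define a where "a i j = pi_quot (A $ i $ j)" for i j
  have A_eq: "A$l$k = \<pi> * a l k" "A$k$l = \<pi> * a k l" "A$k$m = \<pi> * a k m" "A$l$m = \<pi> * a l m"
    unfolding a_def using d by (auto intro: K2t_offdiag_eq[OF A])
  define c where "c = A$k$k * (- gi) * gcnj (a l k) + a k l * gcnj (A$l$l) + a k m * (- gi) * \<pi> * gcnj (a l m)"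
  have "\<pi> * c = A$k$k * gcnj (A$l$k) + A$k$l * gcnj (A$l$l) + A$k$m * gcnj (A$l$m)"
    unfolding c_def A_eq by (simp add: gcnj_pi algebra_simps)
  then have "\<pi> * c = 0" using sum0 by simp
  then have "c = 0" by (rule pi_mult_eq_0)
  then have "\<not> unit_mod_pi c" by simp
  then show ?thesis
    using K2t_diag_unit[OF A] unfolding c_def offdiag_residue_def a_def by simp
qed

text \<open>Compare the entries \<open>(k, k)\<close> and \<open>(l, l)\<close> of \<open>A A\<^sup>* = \<lambda>I\<close> modulo \<open>\<pi>\<^sup>3\<close>, where the diagonal
  entries of \<open>A\<close> have norm \<open>1\<close>.\<close>

lemma K2t_offdiag_residue_rows:
  assumes A: "A \<in> K2t" and d: "k \<noteq> l" "k \<noteq> m" "l \<noteq> m"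
  shows "(offdiag_residue A k l \<noteq> offdiag_residue A k m)
    = (offdiag_residue A l k \<noteq> offdiag_residue A l m)"
proof -
  obtain lam where lam: "A ** ctrans A = mat (gof lam)"
    using A unfolding K2t_iff by (metis GU3_Z2_similitude)
  have d': "l \<noteq> k" "l \<noteq> m" "k \<noteq> m" using d by auto
  have row_k: "A$k$k * gcnj (A$k$k) + A$k$l * gcnj (A$k$l) + A$k$m * gcnj (A$k$m) = gof lam"
    using ctrans_mult_nth_3[OF d, of A k k] lam by (simp add: mat_def)
  have row_l: "A$l$l * gcnj (A$l$l) + A$l$k * gcnj (A$l$k) + A$l$m * gcnj (A$l$m) = gof lam"
    using ctrans_mult_nth_3[OF d', of A l l] lam by (simp add: mat_def)
  define a where "a i j = pi_quot (A $ i $ j)" for i j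
  have A_eq: "A$l$k = \<pi> * a l k" "A$k$l = \<pi> * a k l" "A$k$m = \<pi> * a k m" "A$l$m = \<pi> * a l m"
    unfolding a_def using d by (auto intro: K2t_offdiag_eq[OF A])
  define y where "y = - gi * (a k l * gcnj (a k l) + a k m * gcnj (a k m)
    - a l k * gcnj (a l k) - a l m * gcnj (a l m))"
  have diag: "\<pi> ^ 3 dvd A$k$k - 1" "\<pi> ^ 3 dvd A$l$l - 1" using A by (simp_all add: K2t_iff)
  have "\<pi> * \<pi> * y = (A$k$l * gcnj (A$k$l) + A$k$m * gcnj (A$k$m))
      - (A$l$k * gcnj (A$l$k) + A$l$m * gcnj (A$l$m))"
    unfolding A_eq pi_mult_norm y_def by (simp add: algebra_simps)
  also have "\<dots> = (A$l$l * gcnj (A$l$l) - 1) - (A$k$k * gcnj (A$k$k) - 1)"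
    using row_k row_l by (simp add: algebra_simps)
  finally have "\<pi> ^ 3 dvd \<pi> * \<pi> * y"
    using dvd_diff[OF pi_power_dvd_norm_diff_one[OF diag(2)] pi_power_dvd_norm_diff_one[OF diag(1)]]
    by (simp only:)
  then have "\<pi> dvd y" by (rule pi_cube_dvd_pi_squared_mult)
  then have "\<not> unit_mod_pi y" by (simp add: unit_mod_pi_def)
  then show ?thesis unfolding y_def offdiag_residue_def a_def by auto
qed

lemma K2t_offdiag_residue_const:
  assumes A: "A \<in> K2t" and "k \<noteq> l"
  shows "offdiag_residue A k l = offdiag_residue A 1 2"
proof -
  have d: "(1::3) \<noteq> 2" "(1::3) \<noteq> 3" "(2::3) \<noteq> 3" by simp_all
  note sym = K2t_offdiag_residue_sym[OF A] and rows = K2t_offdiag_residue_rows[OF A]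
  have "offdiag_residue A 2 1 = offdiag_residue A 1 2" "offdiag_residue A 3 1 = offdiag_residue A 1 3"
    "offdiag_residue A 3 2 = offdiag_residue A 2 3"
    using sym[OF d] sym[of 1 3 2] sym[of 2 3 1] d by auto
  moreover have "offdiag_residue A 1 3 = offdiag_residue A 1 2" "offdiag_residue A 2 3 = offdiag_residue A 1 2"
    using rows[OF d] rows[of 1 3 2] d calculation by auto
  ultimately show ?thesis using \<open>k \<noteq> l\<close> exhaust_3[of k] exhaust_3[of l] by auto
qed

lemma K2t_multiplier:
  assumes A: "A \<in> K2t" and lam: "A ** ctrans A = mat (gof lam)"
  shows "\<pi> ^ 3 dvd gof lam - 1"
proof -
  have d: "(1::3) \<noteq> 2" "(1::3) \<noteq> 3" "(2::3) \<noteq> 3" by simp_all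
  have row: "A$1$1 * gcnj (A$1$1) + A$1$2 * gcnj (A$1$2) + A$1$3 * gcnj (A$1$3) = gof lam"
    using ctrans_mult_nth_3[OF d, of A 1 1] lam by (simp add: mat_def)
  define a where "a j = pi_quot (A $ 1 $ j)" for j
  have A_eq: "A$1$2 = \<pi> * a 2" "A$1$3 = \<pi> * a 3"
    unfolding a_def using d by (auto intro: K2t_offdiag_eq[OF A])
  define z where "z = - gi * (a 2 * gcnj (a 2) + a 3 * gcnj (a 3))"
  have eq: "gof lam - 1 = (A$1$1 * gcnj (A$1$1) - 1) + \<pi> * \<pi> * z"
    using row unfolding z_def A_eq pi_mult_norm by (simp add: algebra_simps)
  have diag: "\<pi> ^ 3 dvd A$1$1 * gcnj (A$1$1) - 1"
    using A by (simp add: K2t_iff pi_power_dvd_norm_diff_one)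
  have "unit_mod_pi (a 2) = unit_mod_pi (a 3)"
    using K2t_offdiag_residue_const[OF A, of 1 3] unfolding offdiag_residue_def a_def by simp
  then have "\<not> unit_mod_pi z" unfolding z_def by simp
  then obtain w where "z = \<pi> * w" unfolding unit_mod_pi_def by (auto elim: dvdE)
  then have "\<pi> * \<pi> * z = \<pi> ^ 3 * w" by (simp add: power3_eq_cube mult.assoc)
  then show ?thesis unfolding eq by (simp add: dvd_add[OF diag])
qed

lemma K2t_mult:
  assumes A: "A \<in> K2t" and B: "B \<in> K2t"
  shows "A ** B \<in> K2t"
proof -
  have "\<pi> ^ 3 dvd (A ** B) $ k $ k - 1" for k
  proof -
    have "(1::3) \<noteq> 2" "(1::3) \<noteq> 3" "(2::3) \<noteq> 3" by simp_all
    then obtain l m where d: "k \<noteq> l" "k \<noteq> m" "l \<noteq> (m::3)"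
      using exhaust_3[of k] by metis
    define a where "a j = pi_quot (A $ k $ j)" for j
    define b where "b j = pi_quot (B $ j $ k)" for j
    have AB_eq: "A$k$l = \<pi> * a l" "A$k$m = \<pi> * a m" "B$l$k = \<pi> * b l" "B$m$k = \<pi> * b m"
      unfolding a_def b_def using d by (auto intro: K2t_offdiag_eq[OF A] K2t_offdiag_eq[OF B])
    have "offdiag_residue A k l = offdiag_residue A k m" "offdiag_residue B l k = offdiag_residue B m k"
      using K2t_offdiag_residue_const[OF A] K2t_offdiag_residue_const[OF B] d by (metis not_sym)+
    then have "\<not> unit_mod_pi (a l * b l + a m * b m)"
      unfolding offdiag_residue_def a_def b_def by simp
    then obtain w where w: "a l * b l + a m * b m = \<pi> * w" unfolding unit_mod_pi_def by (auto elim: dvdE)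
    have "(A ** B) $ k $ k = A$k$k * B$k$k + A$k$l * B$l$k + A$k$m * B$m$k"
      by (simp add: matrix_matrix_mult_def sum_UNIV_3_distinct[OF d])
    also have "\<dots> = A$k$k * B$k$k + \<pi> ^ 3 * w"
      unfolding AB_eq power3_eq_cube using w by (simp add: algebra_simps flip: w)
    finally have eq: "(A ** B) $ k $ k - 1 = (A$k$k * B$k$k - 1) + \<pi> ^ 3 * w"
      by (simp add: algebra_simps)
    have "\<pi> ^ 3 dvd A$k$k * B$k$k - 1" using A B by (simp add: K2t_iff dvd_mult_diff_one)
    then show ?thesis unfolding eq by (rule dvd_add) simp
  qed
  then show ?thesis using A B GU3_Z2_mult by (simp add: K2t_iff)
qed

lemma one_K2t: "mat 1 \<in> K2t"
  using one_GU3_Z GU3_Z_subset by (auto simp: K2t_iff mat_def)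

lemma inv_K2t:
  assumes A: "A \<in> K2t"
  shows "inv\<^bsub>GU3_Z2_grp\<^esub> A \<in> K2t"
proof -
  have G: "A \<in> GU3_Z2" using A by (simp add: K2t_iff)
  obtain lam where lam: "lam dvd 1" "A ** ctrans A = mat (gof lam)" "ctrans A ** A = mat (gof lam)"
    using G by (rule GU3_Z2_similitude)
  obtain m where "1 = lam * m" using lam(1) by (rule dvdE)
  then have lm: "lam * m = 1" by simp
  have "gof m - 1 = - gof m * (gof lam - 1)"
    using lm by (simp add: algebra_simps flip: gof_simps)
  then have m: "\<pi> ^ 3 dvd gof m - 1" using K2t_multiplier[OF A lam(2)] by simp
  have "\<pi> ^ 3 dvd gof m * gcnj (A $ k $ k) - 1" for k
  proof -
    have "\<pi> ^ 3 dvd gcnj (A $ k $ k - 1)" using A by (intro pi_power_dvd_gcnj) (simp add: K2t_iff)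
    then show ?thesis using m dvd_mult_diff_one by simp
  qed
  then have "mat (gof m) ** ctrans A \<in> K2t"
    using GU3_Z2_inverse[OF lam(2,3) lm] by (simp add: K2t_iff mat_matrix_mult_nth)
  then show ?thesis using inv_GU3_Z2[OF G lam(2,3) lm] by simp
qed

lemma subgroup_K2t: "subgroup K2t GU3_Z2_grp"
proof (rule group.subgroupI[OF group_GU3_Z2])
  show "K2t \<subseteq> carrier GU3_Z2_grp" by (auto simp: K2t_iff)
  show "K2t \<noteq> {}" using one_K2t by blast
qed (simp_all add: inv_K2t K2t_mult)

lemma GU3_Z2_decomposition:
  assumes A: "A \<in> GU3_Z2"
  shows "\<exists>K\<in>K2t. \<exists>M\<in>GU3_Z. A = K ** M"
proof -
  obtain \<sigma> where \<sigma>: "bij \<sigma>" "\<forall>k j. unit_mod_pi (A $ k $ j) \<longleftrightarrow> j = \<sigma> k"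
    using A by (rule GU3_Z2_mod_pi_permutation)
  have "\<forall>k. \<exists>v. v \<in> fourth_roots \<and> \<pi> ^ 3 dvd A $ k $ \<sigma> k * v - 1"
    using \<sigma>(2) fourth_root_normalises by blast
  then obtain u where u: "\<forall>k. u k \<in> fourth_roots \<and> \<pi> ^ 3 dvd A $ k $ \<sigma> k * u k - 1"
    by (metis choice)
  define M where "M = monomial_matrix \<sigma> (\<lambda>k. gcnj (u k))"
  have u': "\<forall>k. gcnj (u k) \<in> fourth_roots" using u fourth_roots_gcnj by blast
  have M: "M \<in> GU3_Z"
    unfolding M_def GU3_Z_eq using \<sigma>(1) u' by (intro CollectI exI conjI) auto
  have "ctrans M ** M = mat 1"
    unfolding M_def by (rule monomial_matrix_unitary(2)[OF \<sigma>(1) u'])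
  then have "A = (A ** ctrans M) ** M" by (simp flip: matrix_mul_assoc)
  moreover have "A ** ctrans M \<in> K2t"
  proof -
    have "(A ** ctrans M) $ k $ k = A $ k $ \<sigma> k * u k" for k
      unfolding M_def by (simp add: matrix_mult_ctrans_monomial_nth)
    moreover have "A ** ctrans M \<in> GU3_Z2"
      using A M GU3_Z_subset ctrans_GU3_Z GU3_Z2_mult by blast
    ultimately show ?thesis using u by (simp add: K2t_iff)
  qed
  ultimately show ?thesis using M by blast
qed

lemma K2t_Int_GU3_Z: "K2t \<inter> GU3_Z = {mat 1}"
proof
  show "{mat 1} \<subseteq> K2t \<inter> GU3_Z" using one_K2t one_GU3_Z by simp
  show "K2t \<inter> GU3_Z \<subseteq> {mat 1}"
  proof
    fix M assume M: "M \<in> K2t \<inter> GU3_Z"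
    then obtain \<sigma> u where M_eq: "M = monomial_matrix \<sigma> u" and u: "\<forall>k. u k \<in> fourth_roots"
      by (auto simp: GU3_Z_eq)
    have diag: "\<pi> ^ 3 dvd M $ k $ k - 1" for k using M by (simp add: K2t_iff)
    have "\<sigma> k = k" for k
    proof (rule ccontr)
      assume "\<sigma> k \<noteq> k"
      then have "M $ k $ k = 0" by (simp add: M_eq monomial_matrix_nth)
      then show False using diag[of k] pi_not_dvd_one pi_dvd_if_pi_cube_dvd by fastforce
    qed
    moreover have "u k = 1" for k
      using diag[of k] u fourth_root_congruent_one \<open>\<sigma> k = k\<close> by (simp add: M_eq monomial_matrix_nth)
    ultimately have "M = monomial_matrix id (\<lambda>_. 1)"
      by (simp add: M_eq vec_eq_iff monomial_matrix_nth)
    then show "M \<in> {mat 1}" by (simp add: monomial_matrix_id)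
  qed
qed

lemma conj_GU3_Z_K2t:
  assumes h: "h \<in> K2t" and M: "M \<in> GU3_Z"
  shows "M ** h ** ctrans M \<in> K2t"
proof -
  obtain \<sigma> u where M_eq: "M = monomial_matrix \<sigma> u" and u: "\<forall>k. u k \<in> fourth_roots"
    using M by (auto simp: GU3_Z_eq)
  have "(M ** h ** ctrans M) $ k $ k = h $ \<sigma> k $ \<sigma> k * (u k * gcnj (u k))" for k
    unfolding M_eq by (simp add: matrix_mult_ctrans_monomial_nth monomial_matrix_mult_nth mult_ac)
  moreover have "u k * gcnj (u k) = 1" for k using u fourth_roots_mult_gcnj by blast
  ultimately have "(M ** h ** ctrans M) $ k $ k = h $ \<sigma> k $ \<sigma> k" for k by simp
  moreover have "M ** h ** ctrans M \<in> GU3_Z2"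
    using h M GU3_Z_subset ctrans_GU3_Z[OF M] by (intro GU3_Z2_mult) (auto simp: K2t_iff)
  ultimately show ?thesis using h by (simp add: K2t_iff)
qed

lemma normal_K2t: "K2t \<lhd> GU3_Z2_grp"
proof (rule group.normal_invI[OF group_GU3_Z2 subgroup_K2t])
  fix x h assume x: "x \<in> carrier GU3_Z2_grp" and h: "h \<in> K2t"
  obtain K M where K: "K \<in> K2t" and M: "M \<in> GU3_Z" and x_eq: "x = K ** M"
    using GU3_Z2_decomposition[of x] x by auto
  have "inv\<^bsub>GU3_Z2_grp\<^esub> x = ctrans M ** inv\<^bsub>GU3_Z2_grp\<^esub> K"
    using group.inv_mult_group[OF group_GU3_Z2, of K M] K M GU3_Z_subset inv_GU3_Z x_eq
    by (auto simp: K2t_iff)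
  then have "x ** h ** inv\<^bsub>GU3_Z2_grp\<^esub> x = K ** (M ** h ** ctrans M) ** inv\<^bsub>GU3_Z2_grp\<^esub> K"
    by (simp add: x_eq matrix_mul_assoc)
  also have "\<dots> \<in> K2t" using K h M by (intro K2t_mult inv_K2t conj_GU3_Z_K2t)
  finally show "x \<otimes>\<^bsub>GU3_Z2_grp\<^esub> h \<otimes>\<^bsub>GU3_Z2_grp\<^esub> inv\<^bsub>GU3_Z2_grp\<^esub> x \<in> K2t" by simp
qed

lemma K2t_set_mult_GU3_Z: "K2t <#>\<^bsub>GU3_Z2_grp\<^esub> GU3_Z = carrier GU3_Z2_grp"
proof
  show "K2t <#>\<^bsub>GU3_Z2_grp\<^esub> GU3_Z \<subseteq> carrier GU3_Z2_grp"
    unfolding set_mult_def using GU3_Z_subset GU3_Z2_mult by (auto simp: K2t_iff)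
  show "carrier GU3_Z2_grp \<subseteq> K2t <#>\<^bsub>GU3_Z2_grp\<^esub> GU3_Z"
  proof
    fix A assume "A \<in> carrier GU3_Z2_grp"
    then obtain K M where "K \<in> K2t" "M \<in> GU3_Z" "A = K ** M"
      using GU3_Z2_decomposition[of A] by auto
    then show "A \<in> K2t <#>\<^bsub>GU3_Z2_grp\<^esub> GU3_Z" unfolding set_mult_def by auto
  qed
qed

theorem proposition5p5:
  shows "group GU3_Z2_grp \<and> subgroup K2t GU3_Z2_grp \<and> K2t \<lhd> GU3_Z2_grp
       \<and> subgroup GU3_Z GU3_Z2_grp \<and> K2t \<inter> GU3_Z = {\<one>\<^bsub>GU3_Z2_grp\<^esub>}
       \<and> K2t <#>\<^bsub>GU3_Z2_grp\<^esub> GU3_Z = carrier GU3_Z2_grp"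
  using group_GU3_Z2 subgroup_K2t normal_K2t subgroup_GU3_Z K2t_Int_GU3_Z K2t_set_mult_GU3_Z
  by simp

end
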